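(* Let $h=(h_1,h_2)\in\mathbb{R}^{2*}$, $h\neq0$, let $\nu$ be an antinorm on $\mathbb{R}^2$ whose unit ball $\Omega=\{u:\nu(u)\ge1\}$ has properties $( * )$ and $( ** )$, and let $\mathcal H(h,u)=\langle h,u\rangle+\nu(u)$ for $u\in C=\operatorname{dom}\nu=\operatorname{cl}\mathbb{R}_+\Omega$. 1. If $(-h_1,h_2)\in\operatorname{int}\Omega^\diamond$, the maximum of $\mathcal H(h,u)$ over $u\in C$ is attained only at $u=0$. 2. If $(-h_1,h_2)\in\partial\Omega^\diamond$, write $(-h_1,h_2)=(\cosh_{\Omega^\diamond}\eta,\sinh_{\Omega^\diamond}\eta)$ for some angle $\eta$. Then $\max_{u\in C}\mathcal H(h,u)$ is attained at every point of $\{\lambda(\cosh_\Omega\theta,\sinh_\Omega\theta):\lambda\ge0,\ \theta\in{}^\diamond\eta\}$.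
   Context: An antinorm on $\mathbb{R}^2$ is $\nu:\mathbb{R}^2\to\mathbb{R}\cup\{-\infty\}$ concave, upper semicontinuous, positively homogeneous, with $\operatorname{dom}\nu\neq\varnothing$ and $\nu>0$ on $\operatorname{ri}\operatorname{dom}\nu$; its unit ball is nonempty, closed, convex, avoids $0$ and satisfies $\lambda\Omega\subset\Omega$ for $\lambda>1$. Points of $\mathbb{R}^2$: $(x,y)$; of $\mathbb{R}^{2*}$: $(p,q)$. $( * )$: $\lambda\Omega\cap\partial\Omega=\varnothing$ for $\lambda>1$. $( ** )$: the boundary rays $l_0,l_1$ of $C$ satisfy $\operatorname{dist}(l_k,\Omega)=0$. Antipolar: $\Omega^\diamond=\{(p,q):px-qy\ge1\ \forall(x,y)\in\Omega\}$. Hyperbolic convex trigonometric functions: fix $\omega_0=(x_0,y_0)\in\partial\Omega$, $\omega_0^\diamond=(p_0,q_0)\in\partial\Omega^\diamond$ with $p_0x_0-q_0y_0=1$; for $\omega=(x,y)\in\partial\Omega$, $\theta$ is twice the signed (counterclockwise positive) area of the region bounded by the segment $O\omega_0$, the arc of $\partial\Omega$ from $\omega_0$ to $\omega$ and the segment $\omega O$, and $(\cosh_\Omega\theta,\sinh_\Omega\theta)=(x,y)$; $\cosh_{\Omega^\diamond},\sinh_{\Omega^\diamond}$ are defined likewise; ${}^\diamond\eta$ is the set of $\theta$ with $\cosh_\Omega\theta\cosh_{\Omega^\diamond}\eta-\sinh_\Omega\theta\sinh_{\Omega^\diamond}\eta=1$. *)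

theory Defs
  imports "HOL-Analysis.Analysis" "HOL-Library.Extended_Real"
begin

type_synonym pt = "real \<times> real"

definition edom :: "(pt \<Rightarrow> ereal) \<Rightarrow> pt set" where
  "edom \<nu> = {u. \<nu> u \<noteq> -\<infinity>}"

definition antinorm :: "(pt \<Rightarrow> ereal) \<Rightarrow> bool" where
  "antinorm \<nu> \<longleftrightarrow>
     (\<forall>u. \<nu> u \<noteq> \<infinity>) \<and>
     (\<forall>u v t. 0 < t \<and> t < 1 \<longrightarrow>
        ereal (1 - t) * \<nu> u + ereal t * \<nu> v \<le> \<nu> ((1 - t) *\<^sub>R u + t *\<^sub>R v)) \<and>
     (\<forall>c::real. closed {u. ereal c \<le> \<nu> u}) \<and>
     (\<forall>(l::real) u. 0 < l \<longrightarrow> \<nu> (l *\<^sub>R u) = ereal l * \<nu> u) \<and>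
     edom \<nu> \<noteq> {} \<and>
     (\<forall>u \<in> rel_interior (edom \<nu>). \<nu> u > 0)"

definition unit_ball :: "(pt \<Rightarrow> ereal) \<Rightarrow> pt set" where
  "unit_ball \<nu> = {u. 1 \<le> \<nu> u}"

definition prop_star :: "pt set \<Rightarrow> bool" where
  "prop_star \<Omega> \<longleftrightarrow> (\<forall>l::real. l > 1 \<longrightarrow> ((\<lambda>u. l *\<^sub>R u) ` \<Omega>) \<inter> frontier \<Omega> = {})"

definition boundary_rays :: "pt set \<Rightarrow> pt set set" where
  "boundary_rays C = {{t *\<^sub>R u | t. t \<ge> 0} | u. u \<in> frontier C \<and> u \<noteq> 0}"

definition prop_starstar :: "pt set \<Rightarrow> pt set \<Rightarrow> bool" where
  "prop_starstar C \<Omega> \<longleftrightarrow> (\<forall>l \<in> boundary_rays C. setdist l \<Omega> = 0)"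

definition antipolar :: "pt set \<Rightarrow> pt set" where
  "antipolar \<Omega> = {(p, q). \<forall>(x, y) \<in> \<Omega>. p * x - q * y \<ge> 1}"

definition Ham :: "(pt \<Rightarrow> ereal) \<Rightarrow> pt \<Rightarrow> pt \<Rightarrow> ereal" where
  "Ham \<nu> h u = ereal (h \<bullet> u) + \<nu> u"

definition is_max_point :: "(pt \<Rightarrow> ereal) \<Rightarrow> pt \<Rightarrow> pt \<Rightarrow> bool" where
  "is_max_point \<nu> h u \<longleftrightarrow> u \<in> edom \<nu> \<and> (\<forall>v \<in> edom \<nu>. Ham \<nu> h v \<le> Ham \<nu> h u)"

text \<open>For w in the boundary of S,
  the region bounded by segment O w0, the arc of the boundary from w0 to w and the segment w O
  is the union of segments from O to boundary points in the angular sector spanned by w0 and w.\<close>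
definition cross2 :: "pt \<Rightarrow> pt \<Rightarrow> real" where
  "cross2 a b = fst a * snd b - snd a * fst b"

definition sector_region :: "pt set \<Rightarrow> pt \<Rightarrow> pt \<Rightarrow> pt set" where
  "sector_region S w0 w =
     {t *\<^sub>R b | t b. 0 \<le> t \<and> t \<le> 1 \<and> b \<in> frontier S \<and>
        (\<exists>\<alpha> \<beta>. \<alpha> \<ge> 0 \<and> \<beta> \<ge> 0 \<and> b = \<alpha> *\<^sub>R w0 + \<beta> *\<^sub>R w)}"

text \<open>theta = twice the signed (counterclockwise positive) area.\<close>
definition hyp_angle :: "pt set \<Rightarrow> pt \<Rightarrow> pt \<Rightarrow> real" where
  "hyp_angle S w0 w = 2 * sgn (cross2 w0 w) * measure lebesgue (sector_region S w0 w)"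

definition hyp_angles :: "pt set \<Rightarrow> pt \<Rightarrow> real set" where
  "hyp_angles S w0 = hyp_angle S w0 ` frontier S"

definition hyp_point :: "pt set \<Rightarrow> pt \<Rightarrow> real \<Rightarrow> pt" where
  "hyp_point S w0 \<theta> = (THE w. w \<in> frontier S \<and> hyp_angle S w0 w = \<theta>)"

definition hcosh :: "pt set \<Rightarrow> pt \<Rightarrow> real \<Rightarrow> real" where
  "hcosh S w0 \<theta> = fst (hyp_point S w0 \<theta>)"

definition hsinh :: "pt set \<Rightarrow> pt \<Rightarrow> real \<Rightarrow> real" where
  "hsinh S w0 \<theta> = snd (hyp_point S w0 \<theta>)"

definition diamond_angles :: "pt set \<Rightarrow> pt \<Rightarrow> pt set \<Rightarrow> pt \<Rightarrow> real \<Rightarrow> real set" where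
  "diamond_angles \<Omega> w0 \<Omega>d w0d \<eta> =
     {\<theta> \<in> hyp_angles \<Omega> w0.
        hcosh \<Omega> w0 \<theta> * hcosh \<Omega>d w0d \<eta> - hsinh \<Omega> w0 \<theta> * hsinh \<Omega>d w0d \<eta> = 1}"

end

theory Submission
  imports Defs
begin

(* On the domain of nu the defining inequality p x - q y >= 1 of the antipolar, valid on the
   unit ball, extends by homogeneity and upper semicontinuity to p x - q y >= nu (x, y).  For
   (p, q) = (-h1, h2) this says H(h, u) <= 0 = H(h, 0).  If (-h1, h2) is interior it can be moved
   a little in a direction depending on u, which makes the inequality strict for u <> 0.  If it
   is a boundary point, theta in diamond eta means that the boundary point w of the unit ball with
   angle theta satisfies <h, w> = -1, while nu w = 1 by the star property; so H vanishes on the ray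
   through w.  That cosh and sinh of the unit ball are well defined, i.e. that the boundary point
   is determined by its angle, follows from the strict monotonicity of the sector area along the
   boundary. *)

section \<open>Wedges in the plane\<close>

definition wedge :: "pt \<Rightarrow> pt \<Rightarrow> pt set" where
  "wedge a b = {\<alpha> *\<^sub>R a + \<beta> *\<^sub>R b | \<alpha> \<beta>. 0 \<le> \<alpha> \<and> 0 \<le> \<beta>}"

definition open_wedge :: "pt \<Rightarrow> pt \<Rightarrow> pt set" where
  "open_wedge a b = {\<alpha> *\<^sub>R a + \<beta> *\<^sub>R b | \<alpha> \<beta>. 0 < \<alpha> \<and> 0 < \<beta>}"

lemma cross2_antisym: "cross2 a b = - cross2 b a"
  by (simp add: cross2_def)

lemma cross2_self [simp]: "cross2 a a = 0"
  by (simp add: cross2_def)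

lemma cross2_add_scaleR_left: "cross2 (\<alpha> *\<^sub>R a + \<beta> *\<^sub>R b) c = \<alpha> * cross2 a c + \<beta> * cross2 b c"
  by (simp add: cross2_def algebra_simps)

lemma cross2_add_scaleR_right: "cross2 a (\<alpha> *\<^sub>R b + \<beta> *\<^sub>R c) = \<alpha> * cross2 a b + \<beta> * cross2 a c"
  by (simp add: cross2_def algebra_simps)

lemma cross2_eq_0_imp_collinear:
  assumes "cross2 a b = 0" "a \<noteq> 0"
  obtains c where "b = c *\<^sub>R a"
proof (cases "fst a = 0")
  case True
  then show ?thesis
    using assms by (intro that[of "snd b / snd a"]) (auto simp: cross2_def prod_eq_iff)
next
  case False
  then show ?thesis
    using assms by (intro that[of "fst b / fst a"]) (auto simp: cross2_def prod_eq_iff field_simps)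
qed

lemma cross2_coordinates:
  assumes "cross2 a b \<noteq> 0"
  shows "p = (cross2 p b / cross2 a b) *\<^sub>R a + (cross2 a p / cross2 a b) *\<^sub>R b"
proof -
  have "fst p * cross2 a b = cross2 p b * fst a + cross2 a p * fst b"
       "snd p * cross2 a b = cross2 p b * snd a + cross2 a p * snd b"
    by (simp_all add: cross2_def algebra_simps)
  then show ?thesis
    using assms by (simp add: prod_eq_iff add_divide_distrib[symmetric] eq_divide_eq)
qed

lemma cross2_coordinates_unique:
  assumes "p = \<alpha> *\<^sub>R a + \<beta> *\<^sub>R b" "cross2 a b \<noteq> 0"
  shows "\<alpha> = cross2 p b / cross2 a b" "\<beta> = cross2 a p / cross2 a b"
  using assms by (simp_all add: cross2_add_scaleR_left cross2_add_scaleR_right cross2_antisym[of b a])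

lemma wedge_eq_cross2:
  assumes "cross2 a b \<noteq> 0"
  shows "wedge a b = {p. 0 \<le> cross2 p b / cross2 a b \<and> 0 \<le> cross2 a p / cross2 a b}"
proof safe
  fix p assume "p \<in> wedge a b"
  then obtain \<alpha> \<beta> where p: "p = \<alpha> *\<^sub>R a + \<beta> *\<^sub>R b" and "0 \<le> \<alpha>" "0 \<le> \<beta>"
    by (auto simp: wedge_def)
  show "0 \<le> cross2 p b / cross2 a b" "0 \<le> cross2 a p / cross2 a b"
    using cross2_coordinates_unique[OF p assms] \<open>0 \<le> \<alpha>\<close> \<open>0 \<le> \<beta>\<close> by simp_all
next
  fix p assume "0 \<le> cross2 p b / cross2 a b" "0 \<le> cross2 a p / cross2 a b"
  with cross2_coordinates[OF assms, of p] show "p \<in> wedge a b"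
    unfolding wedge_def by blast
qed

lemma open_wedge_eq_cross2:
  assumes "cross2 a b \<noteq> 0"
  shows "open_wedge a b = {p. 0 < cross2 p b / cross2 a b \<and> 0 < cross2 a p / cross2 a b}"
proof safe
  fix p assume "p \<in> open_wedge a b"
  then obtain \<alpha> \<beta> where p: "p = \<alpha> *\<^sub>R a + \<beta> *\<^sub>R b" and "0 < \<alpha>" "0 < \<beta>"
    by (auto simp: open_wedge_def)
  show "0 < cross2 p b / cross2 a b" "0 < cross2 a p / cross2 a b"
    using cross2_coordinates_unique[OF p assms] \<open>0 < \<alpha>\<close> \<open>0 < \<beta>\<close> by simp_all
next
  fix p assume "0 < cross2 p b / cross2 a b" "0 < cross2 a p / cross2 a b"
  with cross2_coordinates[OF assms, of p] show "p \<in> open_wedge a b"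
    unfolding open_wedge_def by blast
qed

lemma continuous_on_cross2 [continuous_intros]:
  "continuous_on S f \<Longrightarrow> continuous_on S g \<Longrightarrow> continuous_on S (\<lambda>x. cross2 (f x) (g x))"
  unfolding cross2_def by (intro continuous_intros)

lemma closed_wedge:
  assumes "cross2 a b \<noteq> 0"
  shows "closed (wedge a b)"
  unfolding wedge_eq_cross2[OF assms]
  by (intro closed_Collect_conj closed_Collect_le continuous_on_divide continuous_on_cross2
      continuous_on_id continuous_on_const) (use assms in auto)

lemma open_open_wedge:
  assumes "cross2 a b \<noteq> 0"
  shows "open (open_wedge a b)"
  unfolding open_wedge_eq_cross2[OF assms]
  by (intro open_Collect_conj open_Collect_less continuous_on_divide continuous_on_cross2
      continuous_on_id continuous_on_const) (use assms in auto)

lemma open_wedge_subset_wedge: "open_wedge a b \<subseteq> wedge a b"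
  unfolding open_wedge_def wedge_def by (blast intro: less_imp_le)

lemma wedge_subset_wedge:
  assumes "b \<in> wedge a c"
  shows "wedge a b \<subseteq> wedge a c" "wedge b c \<subseteq> wedge a c"
proof -
  obtain \<alpha>0 \<beta>0 where b: "b = \<alpha>0 *\<^sub>R a + \<beta>0 *\<^sub>R c" "0 \<le> \<alpha>0" "0 \<le> \<beta>0"
    using assms by (auto simp: wedge_def)
  show "wedge a b \<subseteq> wedge a c"
  proof
    fix p assume "p \<in> wedge a b"
    then obtain \<alpha> \<beta> where "p = \<alpha> *\<^sub>R a + \<beta> *\<^sub>R b" "0 \<le> \<alpha>" "0 \<le> \<beta>"
      by (auto simp: wedge_def)
    then have "p = (\<alpha> + \<beta> * \<alpha>0) *\<^sub>R a + (\<beta> * \<beta>0) *\<^sub>R c"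
      "0 \<le> \<alpha> + \<beta> * \<alpha>0" "0 \<le> \<beta> * \<beta>0"
      using b by (simp_all add: algebra_simps)
    then show "p \<in> wedge a c"
      unfolding wedge_def by blast
  qed
  show "wedge b c \<subseteq> wedge a c"
  proof
    fix p assume "p \<in> wedge b c"
    then obtain \<alpha> \<beta> where "p = \<alpha> *\<^sub>R b + \<beta> *\<^sub>R c" "0 \<le> \<alpha>" "0 \<le> \<beta>"
      by (auto simp: wedge_def)
    then have "p = (\<alpha> * \<alpha>0) *\<^sub>R a + (\<alpha> * \<beta>0 + \<beta>) *\<^sub>R c"
      "0 \<le> \<alpha> * \<alpha>0" "0 \<le> \<alpha> * \<beta>0 + \<beta>"
      using b by (simp_all add: algebra_simps)
    then show "p \<in> wedge a c"
      unfolding wedge_def by blast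
  qed
qed

lemma open_wedge_disjoint_wedge:
  assumes "b \<in> open_wedge a c" "cross2 a c \<noteq> 0"
  shows "open_wedge b c \<inter> wedge a b = {}"
proof -
  obtain \<alpha>0 \<beta>0 where b: "b = \<alpha>0 *\<^sub>R a + \<beta>0 *\<^sub>R c" "0 < \<alpha>0" "0 < \<beta>0"
    using assms(1) by (auto simp: open_wedge_def)
  have bc: "cross2 b c = \<alpha>0 * cross2 a c" and ba: "cross2 b a = - \<beta>0 * cross2 a c"
    by (simp_all add: b cross2_add_scaleR_left cross2_antisym[of c a])
  have False
    if "\<alpha> *\<^sub>R b + \<beta> *\<^sub>R c = \<gamma> *\<^sub>R a + \<delta> *\<^sub>R b" "0 < \<alpha>" "0 < \<beta>" "0 \<le> \<gamma>" "0 \<le> \<delta>"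
    for \<alpha> \<beta> \<gamma> \<delta>
  proof -
    have "\<beta> * cross2 b c = \<gamma> * cross2 b a"
      using arg_cong[OF that(1), of "cross2 b"] by (simp add: cross2_add_scaleR_right)
    then have "(\<beta> * \<alpha>0 + \<gamma> * \<beta>0) * cross2 a c = 0"
      by (simp add: bc ba algebra_simps)
    moreover have "0 < \<beta> * \<alpha>0 + \<gamma> * \<beta>0"
      using that b by (simp add: add_pos_nonneg)
    ultimately show False
      using assms(2) by simp
  qed
  then show ?thesis
    unfolding open_wedge_def wedge_def by blast
qed

lemma same_side_imp_open_wedge:
  assumes "0 < cross2 a b * cross2 a c" "cross2 b c \<noteq> 0"
  shows "b \<in> open_wedge a c \<or> c \<in> open_wedge a b"
proof -
  have ac: "cross2 a c \<noteq> 0" and ab: "cross2 a b \<noteq> 0"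
    using assms(1) by auto
  have "0 < cross2 a b / cross2 a c"
    using assms(1) by (simp add: zero_less_mult_iff zero_less_divide_iff)
  moreover have "0 < cross2 a c / cross2 a b"
    using assms(1) by (auto simp: zero_less_mult_iff zero_less_divide_iff)
  moreover have "0 < cross2 b c / cross2 a c \<or> 0 < cross2 c b / cross2 a b"
  proof -
    have "cross2 b c / cross2 a c * (cross2 c b / cross2 a b) = - (cross2 b c)\<^sup>2 / (cross2 a b * cross2 a c)"
      by (simp add: cross2_antisym[of c b] power2_eq_square)
    also have "\<dots> < 0"
      using assms by simp
    finally show ?thesis
      by (meson mult_nonpos_nonpos not_le)
  qed
  ultimately show ?thesis
    unfolding open_wedge_eq_cross2[OF ac] open_wedge_eq_cross2[OF ab] by blast
qed

lemma open_wedge_inter_ball_nonempty: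
  assumes "0 < r"
  shows "open_wedge a b \<inter> ball 0 r \<noteq> {}"
proof -
  define \<epsilon> where "\<epsilon> = r / (norm a + norm b + 1)"
  have pos: "0 < norm a + norm b + 1"
    by (simp add: add_nonneg_pos)
  then have "0 < \<epsilon>"
    using assms by (simp add: \<epsilon>_def)
  have "norm (\<epsilon> *\<^sub>R a + \<epsilon> *\<^sub>R b) \<le> \<epsilon> * (norm a + norm b)"
    using norm_triangle_ineq[of "\<epsilon> *\<^sub>R a" "\<epsilon> *\<^sub>R b"] \<open>0 < \<epsilon>\<close> by (simp add: distrib_left)
  also have "\<dots> < \<epsilon> * (norm a + norm b + 1)"
    using \<open>0 < \<epsilon>\<close> by simp
  also have "\<dots> = r"
    using pos by (simp add: \<epsilon>_def)
  finally have "\<epsilon> *\<^sub>R a + \<epsilon> *\<^sub>R b \<in> open_wedge a b \<inter> ball 0 r"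
    using \<open>0 < \<epsilon>\<close> unfolding open_wedge_def by auto
  then show ?thesis
    by blast
qed

lemma sector_region_eq_image:
  "sector_region S a b = (\<lambda>(t, x). t *\<^sub>R x) ` ({0..1} \<times> (frontier S \<inter> wedge a b))"
proof (intro set_eqI iffI)
  fix p assume "p \<in> sector_region S a b"
  then obtain t x where "p = t *\<^sub>R x" "0 \<le> t" "t \<le> 1" "x \<in> frontier S" "x \<in> wedge a b"
    unfolding sector_region_def wedge_def by blast
  then show "p \<in> (\<lambda>(t, x). t *\<^sub>R x) ` ({0..1} \<times> (frontier S \<inter> wedge a b))"
    by force
next
  fix p assume "p \<in> (\<lambda>(t, x). t *\<^sub>R x) ` ({0..1} \<times> (frontier S \<inter> wedge a b))"
  then obtain t x where "p = t *\<^sub>R x" "0 \<le> t" "t \<le> 1" "x \<in> frontier S" "x \<in> wedge a b"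
    by auto
  then show "p \<in> sector_region S a b"
    unfolding sector_region_def wedge_def by blast
qed

lemma sector_region_mono:
  "wedge a b \<subseteq> wedge c d \<Longrightarrow> sector_region S a b \<subseteq> sector_region S c d"
  unfolding sector_region_eq_image by blast

lemma sector_region_subset_wedge: "sector_region S a b \<subseteq> wedge a b"
proof
  fix p assume "p \<in> sector_region S a b"
  then obtain t \<alpha> \<beta> where "p = t *\<^sub>R (\<alpha> *\<^sub>R a + \<beta> *\<^sub>R b)" "0 \<le> t" "0 \<le> \<alpha>" "0 \<le> \<beta>"
    unfolding sector_region_def by blast
  then have "p = (t * \<alpha>) *\<^sub>R a + (t * \<beta>) *\<^sub>R b" "0 \<le> t * \<alpha>" "0 \<le> t * \<beta>"
    by (simp_all add: scaleR_add_right)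
  then show "p \<in> wedge a b"
    unfolding wedge_def by blast
qed

lemma measure_lt_of_open_subset_diff:
  fixes A B :: "'a::euclidean_space set"
  assumes "compact A" "compact B" "A \<subseteq> B" "open V" "V \<noteq> {}" "V \<subseteq> B - A"
  shows "measure lebesgue A < measure lebesgue B"
proof -
  have "A \<in> lmeasurable" "B \<in> lmeasurable"
    using assms(1,2) by (simp_all add: lmeasurable_compact)
  then have diff: "measure lebesgue (B - A) = measure lebesgue B - measure lebesgue A"
    using assms(3) by (simp add: measurable_measure_Diff)
  have "\<not> negligible (B - A)"
    using open_not_negligible[OF assms(4,5)] negligible_subset[OF _ assms(6)] by blast
  then have "measure lebesgue (B - A) \<noteq> 0"
    using \<open>A \<in> lmeasurable\<close> \<open>B \<in> lmeasurable\<close> by (simp add: negligible_iff_measure0 fmeasurable_Diff)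
  then show ?thesis
    using diff measure_nonneg[of lebesgue "B - A"] by linarith
qed

lemma antipolar_ge_1:
  "p \<in> antipolar S \<Longrightarrow> x \<in> S \<Longrightarrow> 1 \<le> fst p * fst x - snd p * snd x"
  unfolding antipolar_def by (auto simp: case_prod_unfold)

lemma closed_antipolar: "closed (antipolar S)"
proof -
  have "antipolar S = (\<Inter>x\<in>S. {p. 1 \<le> fst p * fst x - snd p * snd x})"
    unfolding antipolar_def by (auto simp: case_prod_unfold)
  then show ?thesis
    by (simp add: closed_INT closed_Collect_le continuous_intros)
qed

lemma abs_hyp_angle:
  "cross2 w0 w \<noteq> 0 \<Longrightarrow> \<bar>hyp_angle S w0 w\<bar> = 2 * measure lebesgue (sector_region S w0 w)"
  by (simp add: hyp_angle_def abs_mult)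

lemma hyp_point_in_frontier:
  assumes "inj_on (hyp_angle S w0) (frontier S)" "\<theta> \<in> hyp_angles S w0"
  shows "hyp_point S w0 \<theta> \<in> frontier S"
proof -
  obtain w where "w \<in> frontier S" "hyp_angle S w0 w = \<theta>"
    using assms(2) by (auto simp: hyp_angles_def)
  with assms(1) have "\<exists>!w. w \<in> frontier S \<and> hyp_angle S w0 w = \<theta>"
    by (auto dest: inj_onD)
  then show ?thesis
    unfolding hyp_point_def by (rule theI'[THEN conjunct1])
qed

section \<open>Antinorms\<close>

locale planar_antinorm =
  fixes \<nu> :: "pt \<Rightarrow> ereal"
  assumes antinorm: "antinorm \<nu>"
begin

lemma not_infinity [simp]: "\<nu> u \<noteq> \<infinity>"
  using antinorm unfolding antinorm_def by blast

lemma concave: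
  "0 < t \<Longrightarrow> t < 1 \<Longrightarrow> ereal (1 - t) * \<nu> u + ereal t * \<nu> v \<le> \<nu> ((1 - t) *\<^sub>R u + t *\<^sub>R v)"
  using antinorm unfolding antinorm_def by blast

lemma closed_superlevel: "closed {u. ereal c \<le> \<nu> u}"
  using antinorm unfolding antinorm_def by blast

lemma positive_homogeneous: "0 < l \<Longrightarrow> \<nu> (l *\<^sub>R u) = ereal l * \<nu> u"
  using antinorm unfolding antinorm_def by blast

lemma edom_nonempty: "edom \<nu> \<noteq> {}"
  using antinorm unfolding antinorm_def by blast

lemma pos_rel_interior_edom: "u \<in> rel_interior (edom \<nu>) \<Longrightarrow> 0 < \<nu> u"
  using antinorm unfolding antinorm_def by blast

lemma edom_finite:
  assumes "u \<in> edom \<nu>"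
  obtains a where "\<nu> u = ereal a"
  using assms not_infinity[of u] unfolding edom_def by (cases "\<nu> u") auto

lemma superlevel_limit:
  assumes "X \<longlonglongrightarrow> u" "\<And>n. ereal c \<le> \<nu> (X n)"
  shows "ereal c \<le> \<nu> u"
proof -
  have "u \<in> {u. ereal c \<le> \<nu> u}"
    by (rule closed_sequentially[OF closed_superlevel]) (use assms in auto)
  then show ?thesis
    by simp
qed

lemma zero [simp]: "\<nu> 0 = 0"
proof -
  obtain u a where u: "\<nu> u = ereal a"
    using edom_nonempty edom_finite by (metis ex_in_conv)
  have "ereal (- \<bar>a\<bar>) \<le> \<nu> 0"
  proof (rule superlevel_limit)
    show "(\<lambda>n. inverse (real (Suc n)) *\<^sub>R u) \<longlonglongrightarrow> 0"
      using tendsto_scaleR[OF LIMSEQ_inverse_real_of_nat tendsto_const, of u] by simp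
    have "\<bar>inverse (real (Suc n)) * a\<bar> \<le> \<bar>a\<bar>" for n
      by (simp add: abs_mult mult_left_le_one_le inverse_le_1_iff)
    then have "- \<bar>a\<bar> \<le> inverse (real (Suc n)) * a" for n
      by (simp add: abs_le_iff) (meson minus_le_iff)
    then show "ereal (- \<bar>a\<bar>) \<le> \<nu> (inverse (real (Suc n)) *\<^sub>R u)" for n
      using u by (simp add: positive_homogeneous)
  qed
  moreover have "\<nu> 0 = ereal 2 * \<nu> 0"
    using positive_homogeneous[of 2 0] by simp
  ultimately show ?thesis
    by (cases "\<nu> 0") auto
qed

lemma homogeneous: "0 \<le> l \<Longrightarrow> \<nu> (l *\<^sub>R u) = ereal l * \<nu> u"
  by (cases "l = 0") (simp_all add: positive_homogeneous zero_ereal_def[symmetric])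

lemma superadditive: "\<nu> u + \<nu> v \<le> \<nu> (u + v)"
proof (cases "\<nu> u = - \<infinity> \<or> \<nu> v = - \<infinity>")
  case True
  then show ?thesis
    using not_infinity[of u] not_infinity[of v] by (cases "\<nu> u"; cases "\<nu> v") auto
next
  case False
  then obtain a b where ab: "\<nu> u = ereal a" "\<nu> v = ereal b"
    using not_infinity by (meson ereal_cases)
  have half: "ereal ((a + b) / 2) \<le> \<nu> ((1/2) *\<^sub>R (u + v))"
    using concave[of "1/2" u v] ab by (simp add: add_divide_distrib scaleR_add_right)
  have "\<nu> u + \<nu> v = ereal 2 * ereal ((a + b) / 2)"
    using ab by simp
  also have "\<dots> \<le> ereal 2 * \<nu> ((1/2) *\<^sub>R (u + v))"
    using half by (rule ereal_mult_left_mono) simp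
  also have "\<dots> = \<nu> (u + v)"
    using positive_homogeneous[of 2 "(1/2) *\<^sub>R (u + v)"] by simp
  finally show ?thesis .
qed

lemma convex_edom: "convex (edom \<nu>)"
  unfolding convex_alt
proof (intro ballI allI impI)
  fix u v and t :: real
  assume "u \<in> edom \<nu>" "v \<in> edom \<nu>" "0 \<le> t \<and> t \<le> 1"
  moreover obtain a b where "\<nu> u = ereal a" "\<nu> v = ereal b"
    using \<open>u \<in> edom \<nu>\<close> \<open>v \<in> edom \<nu>\<close> edom_finite by metis
  ultimately show "(1 - t) *\<^sub>R u + t *\<^sub>R v \<in> edom \<nu>"
    using concave[of t u v] unfolding edom_def
    by (cases "t = 0 \<or> t = 1") (auto simp: order.order_iff_strict)
qed

lemma nonneg:
  assumes "u \<in> edom \<nu>"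
  shows "0 \<le> \<nu> u"
proof -
  obtain c where c: "c \<in> rel_interior (edom \<nu>)"
    using rel_interior_eq_empty convex_edom edom_nonempty by blast
  have "ereal 0 \<le> \<nu> u"
  proof (rule superlevel_limit)
    show "(\<lambda>n. u - inverse (real (Suc n)) *\<^sub>R (u - c)) \<longlonglongrightarrow> u"
      using tendsto_diff[OF tendsto_const tendsto_scaleR[OF LIMSEQ_inverse_real_of_nat tendsto_const],
          of u "u - c"]
      by simp
    fix n
    have "u - inverse (real (Suc n)) *\<^sub>R (u - c) \<in> rel_interior (edom \<nu>)"
      by (rule rel_interior_convex_shrink[OF convex_edom c assms]) (simp_all add: inverse_le_1_iff)
    then have "0 < \<nu> (u - inverse (real (Suc n)) *\<^sub>R (u - c))"
      by (rule pos_rel_interior_edom)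
    then show "ereal 0 \<le> \<nu> (u - inverse (real (Suc n)) *\<^sub>R (u - c))"
      by (simp add: zero_ereal_def[symmetric])
  qed
  then show ?thesis
    by (simp add: zero_ereal_def)
qed

lemma exists_unit: "\<exists>z. \<nu> z = 1"
proof -
  obtain c where c: "c \<in> rel_interior (edom \<nu>)"
    using rel_interior_eq_empty convex_edom edom_nonempty by blast
  then obtain a where a: "\<nu> c = ereal a"
    using rel_interior_subset edom_finite by blast
  have "0 < a"
    using pos_rel_interior_edom[OF c] a by simp
  then have "\<nu> (inverse a *\<^sub>R c) = 1"
    using a by (simp add: positive_homogeneous)
  then show ?thesis ..
qed

lemma unit_level_in_frontier:
  assumes "\<nu> w = 1"
  shows "w \<in> frontier (unit_ball \<nu>)"
proof -
  have "w \<in> closure (- unit_ball \<nu>)"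
    unfolding closure_sequential
  proof (intro exI conjI allI)
    have "(\<lambda>n. 1 - inverse (real (Suc n)) / 2) \<longlonglongrightarrow> 1 - 0 / 2"
      by (intro tendsto_intros LIMSEQ_inverse_real_of_nat) simp
    then show "(\<lambda>n. (1 - inverse (real (Suc n)) / 2) *\<^sub>R w) \<longlonglongrightarrow> w"
      using tendsto_scaleR[OF _ tendsto_const, of _ 1 _ w] by simp
    fix n
    have "0 < 1 - inverse (real (Suc n)) / 2" "1 - inverse (real (Suc n)) / 2 < 1"
      using inverse_le_1_iff[of "real (Suc n)"] by (simp_all add: less_le_trans[of _ 1 2])
    then show "(1 - inverse (real (Suc n)) / 2) *\<^sub>R w \<in> - unit_ball \<nu>"
      using assms by (simp add: unit_ball_def positive_homogeneous one_ereal_def)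
  qed
  moreover have "w \<in> closure (unit_ball \<nu>)"
    using assms closure_subset by (fastforce simp: unit_ball_def)
  ultimately show ?thesis
    by (simp add: frontier_closures)
qed

lemma antipolar_ge_pos:
  assumes "p \<in> antipolar (unit_ball \<nu>)" "0 < \<nu> y"
  shows "\<nu> y \<le> ereal (fst p * fst y - snd p * snd y)"
proof -
  obtain c where c: "\<nu> y = ereal c"
    using assms(2) not_infinity by (cases "\<nu> y") auto
  with assms(2) have "0 < c"
    by simp
  then have "inverse c *\<^sub>R y \<in> unit_ball \<nu>"
    using c by (simp add: unit_ball_def positive_homogeneous)
  from antipolar_ge_1[OF assms(1) this]
  have "1 \<le> fst p * (fst y / c) - snd p * (snd y / c)"
    by (simp add: divide_inverse mult.commute)
  then show ?thesis
    using c \<open>0 < c\<close> by (simp add: diff_divide_distrib[symmetric] le_divide_eq)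
qed

text \<open>Perturb \<open>v\<close> by a small multiple of a unit vector to make \<open>\<nu>\<close> positive, then let the
  multiple tend to 0.\<close>
lemma antipolar_ge:
  assumes p: "p \<in> antipolar (unit_ball \<nu>)" and v: "v \<in> edom \<nu>"
  shows "\<nu> v \<le> ereal (fst p * fst v - snd p * snd v)"
proof -
  define pair where "pair x = fst p * fst x - snd p * snd x" for x
  obtain a where a: "\<nu> v = ereal a"
    using v edom_finite by blast
  obtain z where z: "\<nu> z = 1"
    using exists_unit by blast
  have bound: "a + s \<le> pair v + s * pair z" if "0 < s" for s
  proof -
    have "ereal (a + s) = \<nu> v + \<nu> (s *\<^sub>R z)"
      using a z that by (simp add: positive_homogeneous)
    also have "\<dots> \<le> \<nu> (v + s *\<^sub>R z)"
      by (rule superadditive)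
    also have "\<dots> \<le> ereal (pair (v + s *\<^sub>R z))"
      unfolding pair_def
    proof (rule antipolar_ge_pos[OF p])
      show "0 < \<nu> (v + s *\<^sub>R z)"
        using calculation nonneg[OF v] a that by (simp add: less_le_trans[of 0 "ereal (a + s)"])
    qed
    also have "pair (v + s *\<^sub>R z) = pair v + s * pair z"
      by (simp add: pair_def algebra_simps)
    finally show ?thesis
      by simp
  qed
  have "\<forall>\<^sub>F s in at_right 0. a \<le> pair v + s * (pair z - 1)"
    using eventually_at_right_less[of 0]
    by (rule eventually_mono) (auto simp: right_diff_distrib dest: bound)
  moreover have "((\<lambda>s. pair v + s * (pair z - 1)) \<longlongrightarrow> pair v + 0 * (pair z - 1)) (at_right 0)"
    by (intro tendsto_intros)
  ultimately have "a \<le> pair v"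
    by (auto intro: tendsto_lowerbound)
  then show ?thesis
    using a by (simp add: pair_def)
qed

lemma Ham_nonpos:
  assumes "(- fst h, snd h) \<in> antipolar (unit_ball \<nu>)" "v \<in> edom \<nu>"
  shows "Ham \<nu> h v \<le> 0"
proof -
  obtain a where "\<nu> v = ereal a"
    using assms(2) edom_finite by blast
  moreover have "\<nu> v \<le> ereal (- (h \<bullet> v))"
    using antipolar_ge[OF assms] by (simp add: inner_prod_def)
  ultimately show ?thesis
    by (simp add: Ham_def)
qed

lemma Ham_neg:
  assumes "(- fst h, snd h) \<in> interior (antipolar (unit_ball \<nu>))" "v \<in> edom \<nu>" "v \<noteq> 0"
  shows "Ham \<nu> h v < 0"
proof -
  obtain r where r: "0 < r" "ball (- fst h, snd h) r \<subseteq> antipolar (unit_ball \<nu>)"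
    using assms(1) mem_interior by blast
  define d where "d = (fst v, - snd v)"
  have "d \<noteq> 0"
    using assms(3) by (simp add: d_def prod_eq_iff)
  define \<epsilon> where "\<epsilon> = r / (2 * norm d)"
  have "0 < \<epsilon>"
    using r \<open>d \<noteq> 0\<close> by (simp add: \<epsilon>_def)
  define p where "p = (- fst h, snd h) - \<epsilon> *\<^sub>R d"
  have "dist (- fst h, snd h) p < r"
    using r \<open>0 < \<epsilon>\<close> \<open>d \<noteq> 0\<close> by (simp add: p_def dist_norm \<epsilon>_def)
  then have "p \<in> antipolar (unit_ball \<nu>)"
    using r(2) by auto
  then have "\<nu> v \<le> ereal (fst p * fst v - snd p * snd v)"
    by (rule antipolar_ge[OF _ assms(2)])
  also have "fst p * fst v - snd p * snd v = - (h \<bullet> v) - \<epsilon> * ((fst v)\<^sup>2 + (snd v)\<^sup>2)"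
    by (simp add: p_def d_def inner_prod_def algebra_simps power2_eq_square)
  finally have "\<nu> v \<le> ereal (- (h \<bullet> v) - \<epsilon> * ((fst v)\<^sup>2 + (snd v)\<^sup>2))" .
  moreover have "0 < (fst v)\<^sup>2 + (snd v)\<^sup>2"
    using assms(3) by (simp add: sum_power2_gt_zero_iff prod_eq_iff)
  ultimately have "\<nu> v < ereal (- (h \<bullet> v))"
    using \<open>0 < \<epsilon>\<close> by (smt (verit) ereal_less_eq(3) le_ereal_less mult_pos_pos)
  then show ?thesis
    using not_infinity[of v] by (cases "\<nu> v") (auto simp: Ham_def)
qed

lemma is_max_point_iff_zero:
  assumes "(- fst h, snd h) \<in> interior (antipolar (unit_ball \<nu>))"
  shows "is_max_point \<nu> h u \<longleftrightarrow> u = 0"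
proof -
  have origin: "0 \<in> edom \<nu>" "Ham \<nu> h 0 = 0"
    by (simp_all add: edom_def Ham_def)
  moreover have "Ham \<nu> h v \<le> 0" if "v \<in> edom \<nu>" for v
    using Ham_neg[OF assms that] origin by (cases "v = 0") simp_all
  ultimately show ?thesis
    unfolding is_max_point_def using Ham_neg[OF assms] by (metis linorder_not_le)
qed

lemma is_max_point_ray:
  assumes "(- fst h, snd h) \<in> antipolar (unit_ball \<nu>)" "\<nu> w = 1" "h \<bullet> w = -1" "0 \<le> l"
  shows "is_max_point \<nu> h (l *\<^sub>R w)"
proof -
  have "\<nu> (l *\<^sub>R w) = ereal l"
    using assms(2,4) by (simp add: homogeneous)
  then have "l *\<^sub>R w \<in> edom \<nu>" "Ham \<nu> h (l *\<^sub>R w) = 0"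
    using assms(3) by (simp_all add: edom_def Ham_def)
  then show ?thesis
    unfolding is_max_point_def using Ham_nonpos[OF assms(1)] by simp
qed

lemma ball_below_unit_level: "\<exists>r>0. \<forall>p\<in>ball 0 r. \<nu> p < 1"
proof -
  have "open (- {u. ereal 1 \<le> \<nu> u})" "0 \<in> - {u. ereal 1 \<le> \<nu> u}"
    using closed_superlevel by (auto simp: open_Compl)
  then obtain r where "0 < r" "ball 0 r \<subseteq> - {u. ereal 1 \<le> \<nu> u}"
    using open_contains_ball by blast
  then have "\<forall>p\<in>ball 0 r. \<nu> p < 1"
    by (auto simp: not_le one_ereal_def)
  with \<open>0 < r\<close> show ?thesis
    by blast
qed

end

section \<open>Antinorms with the star property\<close>

locale planar_antinorm_star = planar_antinorm +
  assumes star: "prop_star (unit_ball \<nu>)"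
begin

lemma frontier_unit_ball: "frontier (unit_ball \<nu>) = {w. \<nu> w = 1}"
proof (intro set_eqI iffI)
  fix w
  assume w: "w \<in> frontier (unit_ball \<nu>)"
  have "closed (unit_ball \<nu>)"
    using closed_superlevel[of 1] by (simp add: unit_ball_def one_ereal_def)
  then have "1 \<le> \<nu> w"
    using w frontier_subset_closed by (fastforce simp: unit_ball_def)
  then obtain a where a: "\<nu> w = ereal a" "1 \<le> a"
    using not_infinity[of w] by (cases "\<nu> w") auto
  show "w \<in> {w. \<nu> w = 1}"
  proof (rule ccontr)
    assume "w \<notin> {w. \<nu> w = 1}"
    with a have "1 < a"
      by (simp add: one_ereal_def)
    then have "inverse a *\<^sub>R w \<in> unit_ball \<nu>"
      using a by (simp add: unit_ball_def positive_homogeneous)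
    then have "w \<in> (\<lambda>u. a *\<^sub>R u) ` unit_ball \<nu> \<inter> frontier (unit_ball \<nu>)"
      using w \<open>1 < a\<close> by (auto intro!: image_eqI[of _ _ "inverse a *\<^sub>R w"])
    with \<open>1 < a\<close> star show False
      unfolding prop_star_def by blast
  qed
qed (simp add: unit_level_in_frontier)

lemma frontier_collinear_eq:
  assumes w: "w \<in> frontier (unit_ball \<nu>)" and w': "w' \<in> frontier (unit_ball \<nu>)"
    and "cross2 w w' = 0"
  shows "w = w'"
proof -
  have unit: "\<nu> w = 1" "\<nu> w' = 1"
    using w w' by (simp_all add: frontier_unit_ball)
  then have "w \<noteq> 0"
    by auto
  then obtain c where c: "w' = c *\<^sub>R w"
    using cross2_eq_0_imp_collinear[OF assms(3)] by blast
  show ?thesis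
  proof (cases "0 < c")
    case True
    then show ?thesis
      using unit c by (simp add: positive_homogeneous one_ereal_def)
  next
    case False
    \<comment> \<open>\<open>w\<close> and \<open>w'\<close> would be opposite unit vectors, but \<open>\<nu>\<close> is superadditive and \<open>\<nu> 0 = 0\<close>.\<close>
    have "ereal (1 - c) = \<nu> w' + \<nu> ((- c) *\<^sub>R w)"
      using False unit homogeneous[of "- c" w] by (simp add: one_ereal_def)
    also have "\<dots> \<le> \<nu> (w' + (- c) *\<^sub>R w)"
      by (rule superadditive)
    also have "w' + (- c) *\<^sub>R w = 0"
      using c by simp
    finally show ?thesis
      using False by simp
  qed
qed

lemma bounded_frontier_inter_wedge:
  assumes "w0 \<in> frontier (unit_ball \<nu>)" "w \<in> frontier (unit_ball \<nu>)"
  shows "bounded (frontier (unit_ball \<nu>) \<inter> wedge w0 w)"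
  unfolding bounded_iff
proof (intro exI ballI)
  fix b
  assume "b \<in> frontier (unit_ball \<nu>) \<inter> wedge w0 w"
  then obtain \<alpha> \<beta> where b: "b = \<alpha> *\<^sub>R w0 + \<beta> *\<^sub>R w" "0 \<le> \<alpha>" "0 \<le> \<beta>" "\<nu> b = 1"
    by (auto simp: wedge_def frontier_unit_ball)
  have "ereal (\<alpha> + \<beta>) = \<nu> (\<alpha> *\<^sub>R w0) + \<nu> (\<beta> *\<^sub>R w)"
    using assms b by (simp add: homogeneous frontier_unit_ball)
  also have "\<dots> \<le> 1"
    using superadditive[of "\<alpha> *\<^sub>R w0" "\<beta> *\<^sub>R w"] b by simp
  finally have "\<alpha> \<le> 1" "\<beta> \<le> 1"
    using b by (simp_all add: one_ereal_def)
  then have "\<alpha> * norm w0 + \<beta> * norm w \<le> norm w0 + norm w"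
    by (intro add_mono mult_left_le_one_le) (simp_all add: b)
  then show "norm b \<le> norm w0 + norm w"
    using norm_triangle_ineq[of "\<alpha> *\<^sub>R w0" "\<beta> *\<^sub>R w"] b by simp
qed

lemma compact_sector_region:
  assumes "w0 \<in> frontier (unit_ball \<nu>)" "w \<in> frontier (unit_ball \<nu>)" "cross2 w0 w \<noteq> 0"
  shows "compact (sector_region (unit_ball \<nu>) w0 w)"
  unfolding sector_region_eq_image
proof (intro compact_continuous_image compact_Times)
  show "compact (frontier (unit_ball \<nu>) \<inter> wedge w0 w)"
    using bounded_frontier_inter_wedge[OF assms(1,2)] closed_wedge[OF assms(3)]
    by (simp add: compact_eq_bounded_closed closed_Int)
qed (auto intro!: continuous_intros simp: case_prod_unfold)

lemma open_wedge_mem_sector_region: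
  assumes w1: "w1 \<in> frontier (unit_ball \<nu>)" and w2: "w2 \<in> frontier (unit_ball \<nu>)"
    and "p \<in> open_wedge w1 w2" "\<nu> p < 1"
  shows "p \<in> sector_region (unit_ball \<nu>) w1 w2"
proof -
  obtain \<alpha> \<beta> where p: "p = \<alpha> *\<^sub>R w1 + \<beta> *\<^sub>R w2" "0 < \<alpha>" "0 < \<beta>"
    using assms(3) unfolding open_wedge_def by auto
  have "ereal (\<alpha> + \<beta>) = \<nu> (\<alpha> *\<^sub>R w1) + \<nu> (\<beta> *\<^sub>R w2)"
    using w1 w2 p by (simp add: positive_homogeneous frontier_unit_ball)
  also have "\<dots> \<le> \<nu> p"
    unfolding p by (rule superadditive)
  finally obtain t where t: "\<nu> p = ereal t" "\<alpha> + \<beta> \<le> t"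
    using not_infinity[of p] by (cases "\<nu> p") auto
  with p \<open>\<nu> p < 1\<close> have "0 < t" "t < 1"
    by (simp_all add: one_ereal_def)
  define b where "b = inverse t *\<^sub>R p"
  have "\<nu> b = 1"
    using t \<open>0 < t\<close> by (simp add: b_def positive_homogeneous)
  moreover have "b = (\<alpha> / t) *\<^sub>R w1 + (\<beta> / t) *\<^sub>R w2" "0 \<le> \<alpha> / t" "0 \<le> \<beta> / t"
    using p \<open>0 < t\<close> by (simp_all add: b_def scaleR_add_right divide_inverse mult.commute)
  moreover have "p = t *\<^sub>R b"
    using \<open>0 < t\<close> by (simp add: b_def)
  ultimately show ?thesis
    using \<open>0 < t\<close> \<open>t < 1\<close> unfolding sector_region_def frontier_unit_ball mem_Collect_eq
    by (intro exI[of _ t] exI[of _ b]) auto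
qed

lemma open_subset_sector_region:
  assumes "w1 \<in> frontier (unit_ball \<nu>)" "w2 \<in> frontier (unit_ball \<nu>)" "cross2 w1 w2 \<noteq> 0"
  obtains V where "open V" "V \<noteq> {}" "V \<subseteq> open_wedge w1 w2" "V \<subseteq> sector_region (unit_ball \<nu>) w1 w2"
proof -
  obtain r where r: "0 < r" "\<forall>p\<in>ball 0 r. \<nu> p < 1"
    using ball_below_unit_level by blast
  show ?thesis
  proof (rule that)
    show "open (open_wedge w1 w2 \<inter> ball 0 r)"
      using open_open_wedge[OF assms(3)] by auto
    show "open_wedge w1 w2 \<inter> ball 0 r \<noteq> {}"
      using open_wedge_inter_ball_nonempty[OF r(1)] .
    show "open_wedge w1 w2 \<inter> ball 0 r \<subseteq> sector_region (unit_ball \<nu>) w1 w2"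
      using open_wedge_mem_sector_region[OF assms(1,2)] r(2) by blast
  qed auto
qed

lemma measure_sector_region_pos:
  assumes "w0 \<in> frontier (unit_ball \<nu>)" "w \<in> frontier (unit_ball \<nu>)" "cross2 w0 w \<noteq> 0"
  shows "0 < measure lebesgue (sector_region (unit_ball \<nu>) w0 w)"
proof -
  obtain V where V: "open V" "V \<noteq> {}" "V \<subseteq> open_wedge w0 w"
    "V \<subseteq> sector_region (unit_ball \<nu>) w0 w"
    by (rule open_subset_sector_region[OF assms])
  show ?thesis
    using measure_lt_of_open_subset_diff[OF compact_empty compact_sector_region[OF assms]
        empty_subsetI V(1,2)] V(4) by simp
qed

lemma measure_sector_region_strict_mono:
  assumes w0: "w0 \<in> frontier (unit_ball \<nu>)" and w: "w \<in> frontier (unit_ball \<nu>)"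
    and w': "w' \<in> frontier (unit_ball \<nu>)"
    and between: "w \<in> open_wedge w0 w'" and "cross2 w0 w' \<noteq> 0"
  shows "measure lebesgue (sector_region (unit_ball \<nu>) w0 w)
    < measure lebesgue (sector_region (unit_ball \<nu>) w0 w')"
proof -
  obtain \<alpha>0 \<beta>0 where "w = \<alpha>0 *\<^sub>R w0 + \<beta>0 *\<^sub>R w'" "0 < \<alpha>0" "0 < \<beta>0"
    using between by (auto simp: open_wedge_def)
  then have "cross2 w0 w \<noteq> 0" "cross2 w w' \<noteq> 0"
    using assms(5) by (simp_all add: cross2_add_scaleR_left cross2_add_scaleR_right)
  have "w \<in> wedge w0 w'"
    using between open_wedge_subset_wedge by blast
  then have sub: "sector_region (unit_ball \<nu>) w0 w \<subseteq> sector_region (unit_ball \<nu>) w0 w'"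
    "sector_region (unit_ball \<nu>) w w' \<subseteq> sector_region (unit_ball \<nu>) w0 w'"
    by (simp_all add: sector_region_mono wedge_subset_wedge)
  obtain V where V: "open V" "V \<noteq> {}" "V \<subseteq> open_wedge w w'"
    "V \<subseteq> sector_region (unit_ball \<nu>) w w'"
    by (rule open_subset_sector_region[OF w w' \<open>cross2 w w' \<noteq> 0\<close>])
  have "V \<inter> sector_region (unit_ball \<nu>) w0 w = {}"
    using V(3) sector_region_subset_wedge[of "unit_ball \<nu>" w0 w]
      open_wedge_disjoint_wedge[OF between assms(5)] by blast
  then have "V \<subseteq> sector_region (unit_ball \<nu>) w0 w' - sector_region (unit_ball \<nu>) w0 w"
    using V(4) sub(2) by blast
  then show ?thesis
    by (rule measure_lt_of_open_subset_diff[OF compact_sector_region[OF w0 w \<open>cross2 w0 w \<noteq> 0\<close>]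
          compact_sector_region[OF w0 w' assms(5)] sub(1) V(1,2)])
qed

lemma sgn_hyp_angle:
  assumes "w0 \<in> frontier (unit_ball \<nu>)" "w \<in> frontier (unit_ball \<nu>)"
  shows "sgn (hyp_angle (unit_ball \<nu>) w0 w) = sgn (cross2 w0 w)"
proof (cases "cross2 w0 w = 0")
  case False
  then show ?thesis
    using measure_sector_region_pos[OF assms False] by (simp add: hyp_angle_def sgn_mult)
qed (simp add: hyp_angle_def)

lemma inj_on_hyp_angle:
  assumes w0: "w0 \<in> frontier (unit_ball \<nu>)"
  shows "inj_on (hyp_angle (unit_ball \<nu>) w0) (frontier (unit_ball \<nu>))"
proof (rule inj_onI)
  fix w w'
  assume w: "w \<in> frontier (unit_ball \<nu>)" and w': "w' \<in> frontier (unit_ball \<nu>)"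
    and eq: "hyp_angle (unit_ball \<nu>) w0 w = hyp_angle (unit_ball \<nu>) w0 w'"
  have sgn_eq: "sgn (cross2 w0 w) = sgn (cross2 w0 w')"
    using eq sgn_hyp_angle[OF w0 w] sgn_hyp_angle[OF w0 w'] by simp
  show "w = w'"
  proof (cases "cross2 w0 w = 0")
    case True
    with sgn_eq have "cross2 w0 w' = 0"
      by (simp add: sgn_0_0)
    with True show ?thesis
      using frontier_collinear_eq[OF w0 w] frontier_collinear_eq[OF w0 w'] by simp
  next
    case False
    with sgn_eq have "cross2 w0 w' \<noteq> 0"
      by (metis sgn_0_0)
    have same_side: "0 < cross2 w0 w * cross2 w0 w'"
      using False sgn_eq by (auto simp: zero_less_mult_iff sgn_if split: if_splits)
    have measure_eq: "measure lebesgue (sector_region (unit_ball \<nu>) w0 w)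
        = measure lebesgue (sector_region (unit_ball \<nu>) w0 w')"
      using eq abs_hyp_angle[OF False, where S = "unit_ball \<nu>"]
        abs_hyp_angle[OF \<open>cross2 w0 w' \<noteq> 0\<close>, where S = "unit_ball \<nu>"] by simp
    show ?thesis
    proof (rule ccontr)
      assume "w \<noteq> w'"
      then have "cross2 w w' \<noteq> 0"
        using frontier_collinear_eq[OF w w'] by blast
      with same_side show False
        using same_side_imp_open_wedge measure_eq
          measure_sector_region_strict_mono[OF w0 w w' _ \<open>cross2 w0 w' \<noteq> 0\<close>]
          measure_sector_region_strict_mono[OF w0 w' w _ False]
        by fastforce
    qed
  qed
qed

end

theorem proposition5:
  fixes \<nu> :: "real \<times> real \<Rightarrow> ereal" and h :: "real \<times> real"
  assumes "antinorm \<nu>"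
    and "h \<noteq> 0"
    and "prop_star (unit_ball \<nu>)"
    and "prop_starstar (edom \<nu>) (unit_ball \<nu>)"
  shows "((- fst h, snd h) \<in> interior (antipolar (unit_ball \<nu>)) \<longrightarrow>
            (\<forall>u. is_max_point \<nu> h u \<longleftrightarrow> u = 0))
       \<and> (\<forall>w0 w0d. w0 \<in> frontier (unit_ball \<nu>)
            \<and> w0d \<in> frontier (antipolar (unit_ball \<nu>))
            \<and> fst w0d * fst w0 - snd w0d * snd w0 = 1 \<longrightarrow>
          (- fst h, snd h) \<in> frontier (antipolar (unit_ball \<nu>)) \<longrightarrow>
          (\<forall>\<eta> \<in> hyp_angles (antipolar (unit_ball \<nu>)) w0d.
             (hcosh (antipolar (unit_ball \<nu>)) w0d \<eta>, hsinh (antipolar (unit_ball \<nu>)) w0d \<eta>)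
               = (- fst h, snd h) \<longrightarrow>
             (\<forall>\<theta> \<in> diamond_angles (unit_ball \<nu>) w0 (antipolar (unit_ball \<nu>)) w0d \<eta>.
                \<forall>lam::real. lam \<ge> 0 \<longrightarrow>
                  is_max_point \<nu> h (lam *\<^sub>R (hcosh (unit_ball \<nu>) w0 \<theta>, hsinh (unit_ball \<nu>) w0 \<theta>)))))"
proof -
  interpret planar_antinorm_star \<nu>
    using assms(1,3) by unfold_locales
  show ?thesis
  proof (intro conjI impI allI ballI)
    fix u
    assume "(- fst h, snd h) \<in> interior (antipolar (unit_ball \<nu>))"
    then show "is_max_point \<nu> h u \<longleftrightarrow> u = 0"
      by (rule is_max_point_iff_zero)
  next
    fix w0 w0d \<eta> \<theta> and lam :: real
    assume w0: "w0 \<in> frontier (unit_ball \<nu>) \<and> w0d \<in> frontier (antipolar (unit_ball \<nu>))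
        \<and> fst w0d * fst w0 - snd w0d * snd w0 = 1"
      and h: "(- fst h, snd h) \<in> frontier (antipolar (unit_ball \<nu>))"
      and "\<eta> \<in> hyp_angles (antipolar (unit_ball \<nu>)) w0d"
      and \<eta>: "(hcosh (antipolar (unit_ball \<nu>)) w0d \<eta>, hsinh (antipolar (unit_ball \<nu>)) w0d \<eta>)
        = (- fst h, snd h)"
      and \<theta>: "\<theta> \<in> diamond_angles (unit_ball \<nu>) w0 (antipolar (unit_ball \<nu>)) w0d \<eta>"
      and "0 \<le> lam"
    define w where "w = hyp_point (unit_ball \<nu>) w0 \<theta>"
    have "w \<in> frontier (unit_ball \<nu>)"
      using hyp_point_in_frontier[OF inj_on_hyp_angle] w0 \<theta> by (simp add: w_def diamond_angles_def)
    moreover have "h \<bullet> w = -1"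
      using \<theta> \<eta> by (simp add: diamond_angles_def hcosh_def hsinh_def w_def inner_prod_def algebra_simps)
    moreover have "(- fst h, snd h) \<in> antipolar (unit_ball \<nu>)"
      using h frontier_subset_closed[OF closed_antipolar] by blast
    ultimately show "is_max_point \<nu> h (lam *\<^sub>R (hcosh (unit_ball \<nu>) w0 \<theta>, hsinh (unit_ball \<nu>) w0 \<theta>))"
      using is_max_point_ray \<open>0 \<le> lam\<close> by (simp add: frontier_unit_ball hcosh_def hsinh_def w_def)
  qed
qed

end
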